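(* Let $\sigma>0$ and $a\in(0,1/3)$. There exists $\varepsilon_0=\varepsilon_0(a,\sigma)>0$ such that for every $\varepsilon\in(0,\varepsilon_0)$ the following holds. Let $(a_n)_{n\ge0},(b_n)_{n\ge0},(c_n)_{n\ge0}$ be sequences of nonnegative real numbers with $a_0,b_0>0$, $c_0=0$, satisfying for all $n\ge0$ $$a_{n+1}\le\varepsilon^a(a_n+c_n)+\varepsilon b_n,\qquad b_{n+1}\le\varepsilon^a(b_n+c_n)+\varepsilon^{1/3}a_n,\qquad c_{n+1}\le\varepsilon^a\big(c_n+\sigma(a_n+b_n)\big).$$ Then for all $n\ge0$, $$a_n\le2\big(\varepsilon^{an/2}a_0+\varepsilon^{1/3+a(n-1)/2}b_0+\sqrt{\sigma}\,\varepsilon^{an/2}(a_0+b_0)\big),$$ $$b_n\le2\big(\varepsilon^{an/2}b_0+\varepsilon^{1/3+a(n-1)/2}a_0+\sqrt{\sigma}\,\varepsilon^{an/2}(a_0+b_0)\big),$$ $$c_n\le2\sqrt{\sigma}\,\varepsilon^{an/2}(a_0+b_0).$$ *)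

theory Defs
  imports Complex_Main
begin

end

theory Submission
  imports Defs
begin

text \<open>
  With \<open>q = \<epsilon> powr (a/2)\<close>, \<open>r = \<epsilon> powr (1/3 - a/2)\<close> and \<open>s = sqrt \<sigma>\<close> one has
  \<open>\<epsilon> \<le> \<epsilon> powr (1/3) = r q\<close>, so the recursions are dominated by a linear system with
  coefficients \<open>q\<^sup>2\<close>, \<open>r q\<close>, \<open>q\<^sup>2 s\<^sup>2\<close>, symmetric in \<open>A\<close> and \<open>B\<close>. For it the bounds
  \<open>A n \<le> q\<^sup>n (A 0 + 2 r B 0 + 2 s (A 0 + B 0))\<close>, the mirror bound for \<open>B n\<close> and
  \<open>C n \<le> 2 s q\<^sup>n (A 0 + B 0)\<close> propagate by one step once \<open>q, r \<le> 1/4\<close> and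
  \<open>q (2 + s (2 + 4 s)) \<le> 2\<close>, which holds for small \<open>\<epsilon>\<close> as \<open>a/2\<close> and \<open>1/3 - a/2\<close> are positive.
\<close>

lemma cross_coupled_step:
  fixes q r w X Y S a b c :: real
  assumes "0 \<le> q" "0 \<le> r" "0 \<le> w" "0 \<le> X" "0 \<le> Y" "0 \<le> S" "q \<le> 1/4" "r \<le> 1/4"
    and "a \<le> w * (X + 2*r*Y + 2*S)" "b \<le> w * (Y + 2*r*X + 2*S)" "c \<le> 2*w*S"
  shows "q^2 * (a + c) + r*q*b \<le> q*w * (X + 2*r*Y + 2*S)"
proof -
  have "q^2 * (a + c) + r*q*b \<le> q^2 * (w * (X + 2*r*Y + 2*S) + 2*w*S) + r*q * (w * (Y + 2*r*X + 2*S))"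
    using assms by (intro add_mono mult_left_mono) auto
  also have "\<dots> = q*w * (q*X + 2*(q*(r*Y)) + 4*(q*S) + r*Y + 2*(r*(r*X)) + 2*(r*S))"
    by (simp add: algebra_simps power2_eq_square)
  also have "\<dots> \<le> q*w * (X + 2*r*Y + 2*S)"
  proof (rule mult_left_mono)
    have rXY: "0 \<le> r*X" "0 \<le> r*Y" using assms by simp_all
    then have "q*X \<le> X/4" "q*(r*Y) \<le> r*Y/4" "q*S \<le> S/4" "r*(r*X) \<le> r*X/4" "r*X \<le> X/4" "r*S \<le> S/4"
      using mult_right_mono[of q "1/4"] mult_right_mono[of r "1/4"] assms by auto
    then show "q*X + 2*(q*(r*Y)) + 4*(q*S) + r*Y + 2*(r*(r*X)) + 2*(r*S) \<le> X + 2*r*Y + 2*S"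
      using assms rXY by linarith
  qed (use assms in simp)
  finally show ?thesis .
qed

lemma damped_step:
  fixes q r s w Z a b c :: real
  assumes "0 \<le> q" "0 \<le> r" "0 \<le> s" "0 \<le> w" "0 \<le> Z" "r \<le> 1/4" "q * (2 + s*(2 + 4*s)) \<le> 2"
    and "a + b \<le> w * ((1 + 2*r)*Z + 4*(s*Z))" "c \<le> 2*w*(s*Z)"
  shows "q^2 * (c + s^2 * (a + b)) \<le> q*w * (2*(s*Z))"
proof -
  have "q^2 * (c + s^2 * (a + b)) \<le> q^2 * (2*w*(s*Z) + s^2 * (w * ((1 + 2*r)*Z + 4*(s*Z))))"
    using assms by (intro mult_left_mono add_mono) auto
  also have "\<dots> = (q * (2 + s*(1 + 2*r + 4*s))) * (q*w*(s*Z))"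
    by (simp add: algebra_simps power2_eq_square)
  also have "\<dots> \<le> 2 * (q*w*(s*Z))"
  proof (rule mult_right_mono)
    have "s*(1 + 2*r + 4*s) \<le> s*(2 + 4*s)"
      using assms by (intro mult_left_mono) auto
    then show "q * (2 + s*(1 + 2*r + 4*s)) \<le> 2"
      using assms mult_left_mono[of "2 + s*(1 + 2*r + 4*s)" "2 + s*(2 + 4*s)" q] by linarith
  qed (use assms in simp)
  finally show ?thesis by (simp add: algebra_simps)
qed

lemma coupled_recursion_bound:
  fixes q r s :: real and A B C :: "nat \<Rightarrow> real"
  assumes "0 \<le> q" "0 \<le> r" "0 \<le> s" "q \<le> 1/4" "r \<le> 1/4" "q * (2 + s*(2 + 4*s)) \<le> 2"
    and "0 \<le> A 0" "0 \<le> B 0" "C 0 \<le> 2*s*(A 0 + B 0)"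
    and recA: "\<And>n. A (Suc n) \<le> q^2 * (A n + C n) + r*q * B n"
    and recB: "\<And>n. B (Suc n) \<le> q^2 * (B n + C n) + r*q * A n"
    and recC: "\<And>n. C (Suc n) \<le> q^2 * (C n + s^2 * (A n + B n))"
  shows "A n \<le> q^n * (A 0 + 2*r*B 0 + 2*s*(A 0 + B 0)) \<and>
         B n \<le> q^n * (B 0 + 2*r*A 0 + 2*s*(A 0 + B 0)) \<and>
         C n \<le> 2*s*q^n*(A 0 + B 0)"
proof -
  define S where "S = s * (A 0 + B 0)"
  have "0 \<le> S" using assms by (simp add: S_def)
  have "A n \<le> q^n * (A 0 + 2*r*B 0 + 2*S) \<and> B n \<le> q^n * (B 0 + 2*r*A 0 + 2*S) \<and> C n \<le> q^n * (2*S)"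
  proof (induction n)
    case 0
    then show ?case using assms by (simp add: S_def)
  next
    case (Suc n)
    then have IH: "A n \<le> q^n * (A 0 + 2*r*B 0 + 2*S)" "B n \<le> q^n * (B 0 + 2*r*A 0 + 2*S)"
      "C n \<le> 2*q^n*S" by simp_all
    have "0 \<le> q^n" using assms by simp
    have "A n + B n \<le> q^n * ((1 + 2*r)*(A 0 + B 0) + 4*S)"
      using IH by (simp add: algebra_simps)
    then have "C (Suc n) \<le> q * q^n * (2*S)"
      using recC[of n] damped_step[OF assms(1-3) \<open>0 \<le> q^n\<close> _ assms(5,6), of "A 0 + B 0" "A n" "B n" "C n"]
        IH(3) assms(7,8) by (simp add: S_def mult.assoc mult.left_commute)
    moreover have "A (Suc n) \<le> q * q^n * (A 0 + 2*r*B 0 + 2*S)"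
      using recA[of n] cross_coupled_step[OF assms(1,2) \<open>0 \<le> q^n\<close> assms(7,8) \<open>0 \<le> S\<close> assms(4,5) IH]
      by linarith
    moreover have "B (Suc n) \<le> q * q^n * (B 0 + 2*r*A 0 + 2*S)"
      using recB[of n] cross_coupled_step[OF assms(1,2) \<open>0 \<le> q^n\<close> assms(8,7) \<open>0 \<le> S\<close> assms(4,5) IH(2,1,3)]
      by linarith
    ultimately show ?case by simp
  qed
  then show ?thesis by (simp add: S_def algebra_simps)
qed

lemma powr_coupled_recursion_bound:
  fixes \<epsilon> a s :: real and A B C :: "nat \<Rightarrow> real"
  assumes "0 < \<epsilon>" "\<epsilon> \<le> 1" "0 \<le> s"
    and small: "\<epsilon> powr (a/2) \<le> 1/4" "\<epsilon> powr (a/2) * (2 + s*(2 + 4*s)) \<le> 2"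
      "\<epsilon> powr (1/3 - a/2) \<le> 1/4"
    and "0 \<le> A 0" "0 \<le> B 0" "C 0 \<le> 2*s*(A 0 + B 0)" "\<And>n. 0 \<le> B n"
    and recA: "\<And>n. A (Suc n) \<le> \<epsilon> powr a * (A n + C n) + \<epsilon> * B n"
    and recB: "\<And>n. B (Suc n) \<le> \<epsilon> powr a * (B n + C n) + \<epsilon> powr (1/3) * A n"
    and recC: "\<And>n. C (Suc n) \<le> \<epsilon> powr a * (C n + s^2 * (A n + B n))"
  shows "A n \<le> 2 * (\<epsilon> powr (a * real n / 2) * A 0 + \<epsilon> powr (1/3 + a * (real n - 1) / 2) * B 0
                    + s * \<epsilon> powr (a * real n / 2) * (A 0 + B 0)) \<and>
         B n \<le> 2 * (\<epsilon> powr (a * real n / 2) * B 0 + \<epsilon> powr (1/3 + a * (real n - 1) / 2) * A 0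
                    + s * \<epsilon> powr (a * real n / 2) * (A 0 + B 0)) \<and>
         C n \<le> 2 * s * \<epsilon> powr (a * real n / 2) * (A 0 + B 0)"
proof -
  define q r where "q = \<epsilon> powr (a/2)" and "r = \<epsilon> powr (1/3 - a/2)"
  have "0 < q" "0 < r" using assms by (simp_all add: q_def r_def)
  have eps_a: "\<epsilon> powr a = q^2"
    by (simp add: q_def power2_eq_square powr_add[symmetric])
  have eps_third: "\<epsilon> powr (1/3) = r*q"
    by (simp add: q_def r_def powr_add[symmetric])
  have eps_n: "\<epsilon> powr (a * real n / 2) = q^n" for n
    using assms by (simp add: q_def powr_realpow[symmetric] powr_powr mult.commute)
  have eps_n': "\<epsilon> powr (1/3 + a * (real n - 1) / 2) = r * q^n" for n
  proof -
    have "\<epsilon> powr (1/3 + a * (real n - 1) / 2) = \<epsilon> powr ((1/3 - a/2) + a * real n / 2)"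
      by (rule arg_cong[where f = "\<lambda>t. \<epsilon> powr t"]) (simp add: field_simps)
    also have "\<dots> = r * q^n" by (simp only: powr_add r_def eps_n)
    finally show ?thesis .
  qed
  have eps_B: "\<epsilon> * B n \<le> r*q * B n" for n
    using powr_mono'[of "1/3" 1 \<epsilon>] assms unfolding eps_third[symmetric]
    by (intro mult_right_mono) auto
  then have "A (Suc n) \<le> q^2 * (A n + C n) + r*q * B n" for n
    using recA[of n] eps_B[of n] unfolding eps_a by linarith
  moreover have "B (Suc n) \<le> q^2 * (B n + C n) + r*q * A n"
    and "C (Suc n) \<le> q^2 * (C n + s^2 * (A n + B n))" for n
    using recB[of n] recC[of n] unfolding eps_a eps_third by simp_all
  moreover have "q \<le> 1/4" "q * (2 + s*(2 + 4*s)) \<le> 2" "r \<le> 1/4"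
    using small unfolding q_def r_def .
  ultimately have "A n \<le> q^n * (A 0 + 2*r*B 0 + 2*s*(A 0 + B 0)) \<and>
             B n \<le> q^n * (B 0 + 2*r*A 0 + 2*s*(A 0 + B 0)) \<and>
             C n \<le> 2*s*q^n*(A 0 + B 0)"
    using assms \<open>0 < q\<close> \<open>0 < r\<close> by (intro coupled_recursion_bound) auto
  moreover have "0 \<le> q^n * A 0" "0 \<le> q^n * B 0" using assms \<open>0 < q\<close> by simp_all
  ultimately show ?thesis unfolding eps_n eps_n' by (simp add: algebra_simps)
qed

lemma eventually_powr_less_at_right_0:
  assumes "0 < p" "0 < c"
  shows "\<forall>\<^sub>F x in at_right 0. (x::real) powr p < c"
proof (rule order_tendstoD(2)[OF _ \<open>0 < c\<close>])
  show "((\<lambda>x. x powr p) \<longlongrightarrow> 0) (at_right 0)"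
    using \<open>0 < p\<close> by (intro tendsto_zero_powrI tendsto_ident_at tendsto_const)
      (auto simp: eventually_at_right_field)
qed

theorem lemma8p5:
  fixes \<sigma> a :: real
  assumes "\<sigma> > 0" and "0 < a" and "a < 1/3"
  shows "\<exists>\<epsilon>0 > 0. \<forall>\<epsilon>::real. 0 < \<epsilon> \<and> \<epsilon> < \<epsilon>0 \<longrightarrow>
    (\<forall>(A::nat \<Rightarrow> real) (B::nat \<Rightarrow> real) (C::nat \<Rightarrow> real).
      (\<forall>n. A n \<ge> 0 \<and> B n \<ge> 0 \<and> C n \<ge> 0) \<and> A 0 > 0 \<and> B 0 > 0 \<and> C 0 = 0 \<and>
      (\<forall>n. A (Suc n) \<le> \<epsilon> powr a * (A n + C n) + \<epsilon> * B n \<and>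
           B (Suc n) \<le> \<epsilon> powr a * (B n + C n) + \<epsilon> powr (1/3) * A n \<and>
           C (Suc n) \<le> \<epsilon> powr a * (C n + \<sigma> * (A n + B n)))
      \<longrightarrow> (\<forall>n.
        A n \<le> 2 * (\<epsilon> powr (a * real n / 2) * A 0
                 + \<epsilon> powr (1/3 + a * (real n - 1) / 2) * B 0
                 + sqrt \<sigma> * \<epsilon> powr (a * real n / 2) * (A 0 + B 0)) \<and>
        B n \<le> 2 * (\<epsilon> powr (a * real n / 2) * B 0
                 + \<epsilon> powr (1/3 + a * (real n - 1) / 2) * A 0
                 + sqrt \<sigma> * \<epsilon> powr (a * real n / 2) * (A 0 + B 0)) \<and>
        C n \<le> 2 * sqrt \<sigma> * \<epsilon> powr (a * real n / 2) * (A 0 + B 0)))"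
proof -
  define K where "K = 2 + sqrt \<sigma> * (2 + 4 * sqrt \<sigma>)"
  have "K > 0" using assms by (simp add: K_def add_pos_nonneg)
  have "\<forall>\<^sub>F \<epsilon> in at_right 0. \<epsilon> < 1 \<and> \<epsilon> powr (a/2) < 1/4 \<and> \<epsilon> powr (a/2) < 2/K \<and>
      \<epsilon> powr (1/3 - a/2) < 1/4"
    using assms \<open>K > 0\<close>
    by (intro eventually_conj eventually_powr_less_at_right_0) (auto simp: eventually_at_right_field)
  then obtain \<epsilon>0 :: real where "\<epsilon>0 > 0" and small: "\<And>\<epsilon>. 0 < \<epsilon> \<Longrightarrow> \<epsilon> < \<epsilon>0 \<Longrightarrow>
      \<epsilon> < 1 \<and> \<epsilon> powr (a/2) < 1/4 \<and> \<epsilon> powr (a/2) * K < 2 \<and> \<epsilon> powr (1/3 - a/2) < 1/4"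
    using \<open>K > 0\<close> by (auto simp: eventually_at_right_field pos_less_divide_eq)
  show ?thesis
    by (intro exI[of _ \<epsilon>0] conjI[OF \<open>\<epsilon>0 > 0\<close>] allI impI, elim conjE,
        rule powr_coupled_recursion_bound) (use assms small in \<open>force simp: K_def\<close>)+
qed

end
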